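(* Let $G$ be a connected non-transmission-regular graph on $n$ vertices, and let $\tau(G) = 2D_{\max}(G) - \partial^Q(G)$. (1) If $n$ is odd, then \[ \tau(G)\geq \frac{n+2-\sqrt{n^2+4n-4}}{2}, \] with equality if and only if $G\cong K_{1,2,\ldots,2}$. (2) If $n$ is even, then \[ \tau(G)\geq \frac{n+4-\sqrt{n^2+8n}}{2}, \] with equality if and only if $G$ is isomorphic to some $(n-4)$-DVDR graph.
   Context: All graphs are finite, simple and undirected. For a connected graph $G$ with vertex set $\{v_1,\dots,v_n\}$, the distance matrix $D(G)$ is the $n\times n$ matrix whose $(i,j)$-entry is the distance $d_{ij}$ between $v_i$ and $v_j$. The transmission $D_i$ of $v_i$ is the $i$-th row sum of $D(G)$; $D_{\max}(G)$ and $D_{\min}(G)$ denote the maximum and minimum transmission over all vertices. $G$ is transmission-regular if $D_{\max}(G)=D_{\min}(G)$, and non-transmission-regular otherwise. The distance signless Laplacian matrix is $Q(G)=D(G)+\mathrm{diag}(D_1,\dots,D_n)$, and $\partial^Q(G)$ denotes its largest eigenvalue. A distinguished vertex deleted regular (DVDR) graph is a connected graph $G$ on $n$ vertices having a vertex $v$ of degree $n-1$ such that $G-v$ is regular; if $G-v$ is $r$-regular, $G$ is called an $r$-DVDR graph. For odd $n=2r-1$, $K_{1,2,\ldots,2}$ denotes the complete $r$-partite graph with one part of size $1$ and $r-1$ parts of size $2$. *)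

theory Defs
  imports "HOL-Analysis.Analysis"
begin

definition simple_graph :: "('n::finite \<Rightarrow> 'n \<Rightarrow> bool) \<Rightarrow> bool" where
  "simple_graph E \<longleftrightarrow> (\<forall>u v. E u v \<longrightarrow> E v u) \<and> (\<forall>u. \<not> E u u)"

definition edge_rel :: "('n \<Rightarrow> 'n \<Rightarrow> bool) \<Rightarrow> ('n \<times> 'n) set" where
  "edge_rel E = {(u, v). E u v}"

definition connected_graph :: "('n::finite \<Rightarrow> 'n \<Rightarrow> bool) \<Rightarrow> bool" where
  "connected_graph E \<longleftrightarrow> (\<forall>u v. (u, v) \<in> (edge_rel E)\<^sup>*)"

definition gdist :: "('n::finite \<Rightarrow> 'n \<Rightarrow> bool) \<Rightarrow> 'n \<Rightarrow> 'n \<Rightarrow> nat" where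
  "gdist E u v = (LEAST k. (u, v) \<in> (edge_rel E) ^^ k)"

definition dist_matrix :: "('n::finite \<Rightarrow> 'n \<Rightarrow> bool) \<Rightarrow> real^'n^'n" where
  "dist_matrix E = (\<chi> i j. real (gdist E i j))"

definition transmission :: "('n::finite \<Rightarrow> 'n \<Rightarrow> bool) \<Rightarrow> 'n \<Rightarrow> real" where
  "transmission E i = (\<Sum>j\<in>UNIV. real (gdist E i j))"

definition Dmax :: "('n::finite \<Rightarrow> 'n \<Rightarrow> bool) \<Rightarrow> real" where
  "Dmax E = Max (range (transmission E))"

definition Dmin :: "('n::finite \<Rightarrow> 'n \<Rightarrow> bool) \<Rightarrow> real" where
  "Dmin E = Min (range (transmission E))"

definition transmission_regular :: "('n::finite \<Rightarrow> 'n \<Rightarrow> bool) \<Rightarrow> bool" where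
  "transmission_regular E \<longleftrightarrow> Dmax E = Dmin E"

definition dsl_matrix :: "('n::finite \<Rightarrow> 'n \<Rightarrow> bool) \<Rightarrow> real^'n^'n" where
  "dsl_matrix E = dist_matrix E + (\<chi> i j. if i = j then transmission E i else 0)"

definition real_eigenvalues :: "real^'n^'n \<Rightarrow> real set" where
  "real_eigenvalues A = {l. \<exists>x. x \<noteq> 0 \<and> A *v x = l *\<^sub>R x}"

text \<open>Largest eigenvalue (the matrix is real symmetric, so all eigenvalues are real).\<close>
definition largest_eigenvalue :: "real^'n^'n \<Rightarrow> real" where
  "largest_eigenvalue A = Max (real_eigenvalues A)"

definition dsl_spectral_radius :: "('n::finite \<Rightarrow> 'n \<Rightarrow> bool) \<Rightarrow> real" where
  "dsl_spectral_radius E = largest_eigenvalue (dsl_matrix E)"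

definition tau :: "('n::finite \<Rightarrow> 'n \<Rightarrow> bool) \<Rightarrow> real" where
  "tau E = 2 * Dmax E - dsl_spectral_radius E"

text \<open>The complete multipartite graph K_{1,2,...,2} on vertex set {0..<n}, n = 2r-1 odd:
  vertex 0 forms the part of size 1, vertices 2i-1 and 2i form the i-th part of size 2.
  Two vertices are adjacent iff they lie in different parts.\<close>
definition K122_adj :: "nat \<Rightarrow> nat \<Rightarrow> bool" where
  "K122_adj u v \<longleftrightarrow> (u + 1) div 2 \<noteq> (v + 1) div 2"

definition iso_K122 :: "('n::finite \<Rightarrow> 'n \<Rightarrow> bool) \<Rightarrow> bool" where
  "iso_K122 E \<longleftrightarrow> (\<exists>f. bij_betw f (UNIV :: 'n set) {0..<CARD('n)} \<and>
      (\<forall>u v. E u v \<longleftrightarrow> K122_adj (f u) (f v)))"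

definition degree :: "('n::finite \<Rightarrow> 'n \<Rightarrow> bool) \<Rightarrow> 'n \<Rightarrow> nat" where
  "degree E v = card {u. E v u}"

definition DVDR :: "nat \<Rightarrow> ('n::finite \<Rightarrow> 'n \<Rightarrow> bool) \<Rightarrow> bool" where
  "DVDR r E \<longleftrightarrow> connected_graph E \<and>
     (\<exists>v. degree E v = CARD('n) - 1 \<and> (\<forall>w. w \<noteq> v \<longrightarrow> card {u. u \<noteq> v \<and> E w u} = r))"

end

theory Submission
  imports Defs
begin

text \<open>
  Let \<open>x \<ge> 0\<close> be a Perron vector of \<open>Q\<close> for \<open>\<rho> = \<partial>\<^sup>Q(G)\<close>, let \<open>k\<^sub>j = Dmax - D\<^sub>j\<close> be the
  transmission deficits and \<open>K = \<Sigma> k\<^sub>j\<close>, and let \<open>i\<close> be a vertex of minimal entry \<open>x\<^sub>i\<close>.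
  Since the column sums of the distance matrix are the transmissions, summing the
  eigen-equations gives \<open>\<tau> \<Sigma> x = 2 \<Sigma> k\<^sub>j x\<^sub>j \<ge> 2 K x\<^sub>i\<close>; the eigen-equation at \<open>i\<close>
  together with \<open>d\<^sub>i\<^sub>j \<ge> 1\<close> gives \<open>\<Sigma> x \<le> (n + 2 k\<^sub>i - \<tau>) x\<^sub>i\<close>. Hence
  \<open>\<tau> (n + 2 k\<^sub>i - \<tau>) \<ge> 2 K\<close>, which forces \<open>\<tau>\<close> to be at least the smaller root of
  \<open>t (n + 2 c - t) = 2 c\<close> for every \<open>1 \<le> c \<le> K\<close>. In the case of equality \<open>k\<^sub>i = K = c\<close> and
  every slack term \<open>(d\<^sub>i\<^sub>j - 1) (x\<^sub>j - x\<^sub>i)\<close> vanishes, which makes \<open>i\<close> adjacent to all other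
  vertices; these then all have exactly \<open>c\<close> non-neighbours. Conversely, on such a cone the
  all-ones vector lowered by the root at the apex is an eigenvector of \<open>Q\<close> for \<open>2 Dmax\<close>
  minus the root.

  A non-transmission-regular graph has \<open>K \<ge> 1\<close>, and \<open>K = n Dmax - \<Sigma> D\<^sub>j\<close> is even when \<open>n\<close>
  is, because \<open>\<Sigma> D\<^sub>j = \<Sigma> d\<^sub>i\<^sub>j\<close> is even. So \<open>c = 1\<close> for odd \<open>n\<close>, where the cones are the
  graphs \<open>K\<^sub>1\<^sub>,\<^sub>2\<^sub>,\<^sub>.\<^sub>.\<^sub>.\<^sub>,\<^sub>2\<close>, and \<open>c = 2\<close> for even \<open>n\<close>, where they are the
  \<open>(n - 4)\<close>-DVDR graphs.
\<close>

section \<open>The smaller root of \<open>t (m - t) = p\<close>\<close>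

definition smaller_root :: "real \<Rightarrow> real \<Rightarrow> real" where
  "smaller_root m p = (m - sqrt (m\<^sup>2 - 4 * p)) / 2"

text \<open>No discriminant hypothesis is needed below: \<^const>\<open>sqrt\<close> is odd and strictly increasing
  on all of the reals.\<close>

lemma smaller_root_le_iff:
  fixes m p t :: real
  assumes "2 * t \<le> m"
  shows "smaller_root m p \<le> t \<longleftrightarrow> p \<le> t * (m - t)"
proof -
  have "smaller_root m p \<le> t \<longleftrightarrow> sqrt ((m - 2 * t)\<^sup>2) \<le> sqrt (m\<^sup>2 - 4 * p)"
    using assms by (auto simp: smaller_root_def field_simps)
  also have "\<dots> \<longleftrightarrow> p \<le> t * (m - t)"
    by (auto simp: power2_eq_square algebra_simps)
  finally show ?thesis .
qed

lemma smaller_root_eq_iff: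
  fixes m p t :: real
  assumes "2 * t \<le> m"
  shows "smaller_root m p = t \<longleftrightarrow> t * (m - t) = p"
proof -
  have "smaller_root m p = t \<longleftrightarrow> sqrt ((m - 2 * t)\<^sup>2) = sqrt (m\<^sup>2 - 4 * p)"
    using assms by (auto simp: smaller_root_def field_simps)
  also have "\<dots> \<longleftrightarrow> t * (m - t) = p"
    by (auto simp: power2_eq_square algebra_simps)
  finally show ?thesis .
qed

context
  fixes n c :: real
  assumes n: "2 \<le> n" and c: "1 \<le> c"
begin

lemma smaller_root_bounds:
  "0 < smaller_root (n + 2 * c) (2 * c)" "smaller_root (n + 2 * c) (2 * c) < 1"
proof -
  have "\<not> smaller_root (n + 2 * c) (2 * c) \<le> 0"
    using smaller_root_le_iff[of 0 "n + 2 * c" "2 * c"] n c by simp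
  then show "0 < smaller_root (n + 2 * c) (2 * c)" by simp
  have "smaller_root (n + 2 * c) (2 * c) \<le> 1" "smaller_root (n + 2 * c) (2 * c) \<noteq> 1"
    using smaller_root_le_iff[of 1 "n + 2 * c" "2 * c"] smaller_root_eq_iff[of 1 "n + 2 * c" "2 * c"]
      n c
    by (simp_all add: algebra_simps)
  then show "smaller_root (n + 2 * c) (2 * c) < 1" by simp
qed

lemma smaller_root_root:
  "smaller_root (n + 2 * c) (2 * c) * (n + 2 * c - smaller_root (n + 2 * c) (2 * c)) = 2 * c"
  using smaller_root_eq_iff[of "smaller_root (n + 2 * c) (2 * c)" "n + 2 * c" "2 * c"]
    smaller_root_bounds n c by simp

lemma root_inequality_if_deficit_inequality:
  fixes k K t :: real
  assumes cK: "c \<le> K" and kK: "k \<le> K" and t: "0 \<le> t" "t < 1"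
    and ineq: "2 * K \<le> t * (n + 2 * k - t)"
  shows "2 * c \<le> t * (n + 2 * c - t)"
    and "t * (n + 2 * c - t) = 2 * c \<Longrightarrow> k = c \<and> K = c"
proof -
  have "2 * c \<le> t * (n + 2 * c - t) \<and> (t * (n + 2 * c - t) = 2 * c \<longrightarrow> k = c \<and> K = c)"
  proof (cases "c \<le> k")
    case True
    have split: "t * (n + 2 * c - t) - 2 * c
        = (t * (n + 2 * k - t) - 2 * K) + 2 * (K - k) + 2 * ((k - c) * (1 - t))"
      by (simp add: algebra_simps)
    have slack: "0 \<le> (k - c) * (1 - t)"
      using True t by simp
    have "2 * c \<le> t * (n + 2 * c - t)"
      using split slack ineq kK by (smt (verit))
    moreover have "(k - c) * (1 - t) = 0 \<and> K = k" if "t * (n + 2 * c - t) = 2 * c"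
      using split slack ineq kK that by (smt (verit))
    ultimately show ?thesis
      using t by auto
  next
    case False
    have split: "t * (n + 2 * c - t) - 2 * c
        = (t * (n + 2 * k - t) - 2 * K) + 2 * (K - c) + 2 * ((c - k) * t)"
      by (simp add: algebra_simps)
    have slack: "0 \<le> (c - k) * t"
      using False t by simp
    have "t \<noteq> 0"
      using ineq cK c by auto
    have "2 * c \<le> t * (n + 2 * c - t)"
      using split slack ineq cK by (smt (verit))
    moreover have "(c - k) * t = 0" if "t * (n + 2 * c - t) = 2 * c"
      using split slack ineq cK that by (smt (verit))
    ultimately show ?thesis
      using False \<open>t \<noteq> 0\<close> by auto
  qed
  then show "2 * c \<le> t * (n + 2 * c - t)" and "t * (n + 2 * c - t) = 2 * c \<Longrightarrow> k = c \<and> K = c"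
    by auto
qed

lemma smaller_root_le_if_deficit_inequality:
  fixes k K t :: real
  assumes "c \<le> K" and "k \<le> K" and "0 \<le> t" and "2 * K \<le> t * (n + 2 * k - t)"
  shows "smaller_root (n + 2 * c) (2 * c) \<le> t"
    and "t = smaller_root (n + 2 * c) (2 * c) \<Longrightarrow> k = c \<and> K = c"
proof -
  have "2 * t \<le> n + 2 * c" if "t < 1"
    using that n c by linarith
  then show "smaller_root (n + 2 * c) (2 * c) \<le> t"
    using root_inequality_if_deficit_inequality(1)[OF assms(1-3) _ assms(4)] smaller_root_le_iff
      smaller_root_bounds(2)
    by fastforce
  show "k = c \<and> K = c" if "t = smaller_root (n + 2 * c) (2 * c)"
    using root_inequality_if_deficit_inequality(2)[OF assms(1-3) _ assms(4)] smaller_root_root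
      smaller_root_bounds(2) that
    by auto
qed

end

section \<open>Perron vectors of symmetric nonnegative matrices\<close>

lemma inner_matrix_vector_sym:
  fixes A :: "real^'n^'n"
  assumes "transpose A = A"
  shows "x \<bullet> (A *v y) = (A *v x) \<bullet> y"
  using dot_lmul_matrix[of x A y] vector_transpose_matrix[of x A] assms by simp

lemma quadratic_form_expand:
  fixes A :: "real^'n^'n"
  shows "x \<bullet> (A *v x) = (\<Sum>i\<in>UNIV. \<Sum>j\<in>UNIV. x$i * A$i$j * x$j)"
  by (simp add: inner_vec_def matrix_vector_mult_def sum_distrib_left mult.assoc)

lemma rayleigh_quotient_attains_max:
  fixes A :: "real^'n^'n"
  obtains x \<mu> where "x \<noteq> 0" "x \<bullet> (A *v x) = \<mu> * (x \<bullet> x)" "\<And>y. y \<bullet> (A *v y) \<le> \<mu> * (y \<bullet> y)"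
proof -
  have "continuous_on (sphere 0 1) (\<lambda>x. x \<bullet> (A *v x))"
    by (intro continuous_intros)
  then have "\<exists>x\<in>sphere 0 1. \<forall>y\<in>sphere 0 1. y \<bullet> (A *v y) \<le> x \<bullet> (A *v x)"
    by (intro continuous_attains_sup) auto
  then obtain x where x: "x \<in> sphere (0::real^'n) 1"
    and max: "\<And>y. y \<in> sphere 0 1 \<Longrightarrow> y \<bullet> (A *v y) \<le> x \<bullet> (A *v x)"
    by blast
  have xx: "x \<bullet> x = 1"
    using x by (simp add: dot_square_norm)
  have "y \<bullet> (A *v y) \<le> (x \<bullet> (A *v x)) * (y \<bullet> y)" for y
  proof (cases "y = 0")
    case False
    define u where "u = y /\<^sub>R norm y"
    have "u \<bullet> (A *v u) \<le> x \<bullet> (A *v x)"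
      using False by (intro max) (simp add: u_def)
    moreover have "u \<bullet> (A *v u) = (y \<bullet> (A *v y)) / (y \<bullet> y)"
      using False
      by (simp add: u_def matrix_vector_mult_scaleR dot_square_norm field_simps power2_eq_square)
    ultimately show ?thesis
      using False by (simp add: divide_le_eq)
  qed simp
  then show thesis
    using x xx by (intro that[of x]) auto
qed

lemma rayleigh_maximizer_is_eigenvector:
  fixes A :: "real^'n^'n"
  assumes sym: "transpose A = A"
    and max: "\<And>y. y \<bullet> (A *v y) \<le> \<mu> * (y \<bullet> y)" and x: "x \<bullet> (A *v x) = \<mu> * (x \<bullet> x)"
  shows "A *v x = \<mu> *\<^sub>R x"
proof -
  define q where "q y = \<mu> * (y \<bullet> y) - y \<bullet> (A *v y)" for y
  define g where "g = A *v x - \<mu> *\<^sub>R x"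
  have expand: "q (x + s *\<^sub>R g) = s * (s * q g - 2 * (g \<bullet> g))" for s
  proof -
    have "x \<bullet> (A *v g) = g \<bullet> (A *v x)"
      using inner_matrix_vector_sym[OF sym] by (simp add: inner_commute)
    then have "q (x + s *\<^sub>R g) = q x + 2 * s * (\<mu> * (g \<bullet> x) - g \<bullet> (A *v x)) + s\<^sup>2 * q g"
      by (simp add: q_def inner_add_left inner_add_right matrix_vector_right_distrib
          matrix_vector_mult_scaleR inner_commute power2_eq_square algebra_simps)
    moreover have "q x = 0"
      using x by (simp add: q_def)
    moreover have "g \<bullet> (A *v x) = g \<bullet> g + \<mu> * (g \<bullet> x)"
      by (simp add: g_def inner_diff_left inner_diff_right inner_commute algebra_simps)
    ultimately show ?thesis
      by (simp add: power2_eq_square algebra_simps)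
  qed
  have quad: "0 \<le> s * (s * q g - 2 * (g \<bullet> g))" for s
    using max[of "x + s *\<^sub>R g"] expand[of s] by (simp add: q_def)
  have "g \<bullet> g \<le> 0"
  proof (cases "q g \<le> 0")
    case True
    then show ?thesis using quad[of 1] by simp
  next
    case False
    show ?thesis
    proof (rule ccontr)
      assume "\<not> g \<bullet> g \<le> 0"
      define s where "s = g \<bullet> g / q g"
      have "0 < s * (g \<bullet> g)"
        using False \<open>\<not> g \<bullet> g \<le> 0\<close> unfolding s_def by (intro mult_pos_pos divide_pos_pos) auto
      moreover have "s * (s * q g - 2 * (g \<bullet> g)) = - (s * (g \<bullet> g))"
        using False by (simp add: s_def algebra_simps)
      ultimately show False
        using quad[of s] by linarith
    qed
  qed
  then have "g \<bullet> g = 0"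
    using inner_ge_zero[of g] by linarith
  then show ?thesis
    by (simp add: g_def)
qed

lemma real_eigenvalues_finite:
  fixes A :: "real^'n^'n"
  assumes sym: "transpose A = A"
  shows "finite (real_eigenvalues A)"
proof -
  define v where "v l = (SOME v. v \<noteq> 0 \<and> A *v v = l *\<^sub>R v)" for l
  have v: "v l \<noteq> 0 \<and> A *v v l = l *\<^sub>R v l" if "l \<in> real_eigenvalues A" for l
    using that unfolding real_eigenvalues_def v_def mem_Collect_eq by (rule someI_ex)
  have "inj_on v (real_eigenvalues A)"
  proof (rule inj_onI)
    fix l l' assume l: "l \<in> real_eigenvalues A" and "l' \<in> real_eigenvalues A"
      and "v l = v l'"
    then have "l *\<^sub>R v l = l' *\<^sub>R v l"
      using v by metis
    then show "l = l'"
      using v[OF l] by simp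
  qed
  moreover have "pairwise orthogonal (v ` real_eigenvalues A)"
  proof (clarsimp simp: pairwise_def)
    fix l l' assume l: "l \<in> real_eigenvalues A" and l': "l' \<in> real_eigenvalues A"
      and ne: "v l \<noteq> v l'"
    have "v l \<bullet> (A *v v l') = (A *v v l) \<bullet> v l'"
      by (rule inner_matrix_vector_sym[OF sym])
    then have "(l' - l) * (v l \<bullet> v l') = 0"
      using v[OF l] v[OF l'] by (simp add: algebra_simps)
    then show "orthogonal (v l) (v l')"
      using ne by (auto simp: orthogonal_def)
  qed
  then have "independent (v ` real_eigenvalues A)"
    using v by (intro pairwise_orthogonal_independent) auto
  then have "finite (v ` real_eigenvalues A)"
    by (rule finiteI_independent)
  ultimately show ?thesis
    using finite_imageD by blast
qed

lemma eigenvalue_le_largest_eigenvalue: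
  fixes A :: "real^'n^'n"
  assumes "transpose A = A" and "l \<in> real_eigenvalues A"
  shows "l \<le> largest_eigenvalue A"
  unfolding largest_eigenvalue_def using assms by (intro Max_ge real_eigenvalues_finite)

lemma largest_eigenvalue_eqI:
  fixes A :: "real^'n^'n"
  assumes sym: "transpose A = A" and max: "\<And>y. y \<bullet> (A *v y) \<le> \<mu> * (y \<bullet> y)"
    and "z \<noteq> 0" and "A *v z = \<mu> *\<^sub>R z"
  shows "largest_eigenvalue A = \<mu>"
  unfolding largest_eigenvalue_def
proof (rule Max_eqI)
  show "finite (real_eigenvalues A)"
    by (rule real_eigenvalues_finite[OF sym])
  show "\<mu> \<in> real_eigenvalues A"
    using assms(3,4) by (auto simp: real_eigenvalues_def)
next
  fix l assume "l \<in> real_eigenvalues A"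
  then obtain v where "v \<noteq> 0" "A *v v = l *\<^sub>R v"
    by (auto simp: real_eigenvalues_def)
  then show "l \<le> \<mu>"
    using max[of v] by simp
qed

lemma largest_eigenvalue_nonneg_eigenvector:
  fixes A :: "real^'n^'n"
  assumes sym: "transpose A = A" and nonneg: "\<And>i j. 0 \<le> A$i$j"
  obtains x where "x \<noteq> 0" "\<And>i. 0 \<le> x$i" "A *v x = largest_eigenvalue A *\<^sub>R x"
proof -
  obtain x \<mu> where x0: "x \<noteq> 0" and x: "x \<bullet> (A *v x) = \<mu> * (x \<bullet> x)"
    and max: "\<And>y. y \<bullet> (A *v y) \<le> \<mu> * (y \<bullet> y)"
    using rayleigh_quotient_attains_max[of A] by blast
  define z where "z = (\<chi> i. \<bar>x$i\<bar>)"
  have zz: "z \<bullet> z = x \<bullet> x"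
    by (simp add: z_def inner_vec_def)
  have "x \<bullet> (A *v x) \<le> z \<bullet> (A *v z)"
    unfolding quadratic_form_expand
  proof (intro sum_mono)
    fix i j
    have "x$i * A$i$j * x$j \<le> \<bar>x$i * A$i$j * x$j\<bar>"
      by (rule abs_ge_self)
    also have "\<dots> = z$i * A$i$j * z$j"
      using nonneg[of i j] by (simp add: z_def abs_mult)
    finally show "x$i * A$i$j * x$j \<le> z$i * A$i$j * z$j" .
  qed
  then have z: "z \<bullet> (A *v z) = \<mu> * (z \<bullet> z)"
    using max[of z] x unfolding zz by linarith
  have z0: "z \<noteq> 0"
    using x0 zz by auto
  have eig: "A *v z = \<mu> *\<^sub>R z"
    by (rule rayleigh_maximizer_is_eigenvector[OF sym max z])
  have "largest_eigenvalue A = \<mu>"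
    by (rule largest_eigenvalue_eqI[OF sym max z0 eig])
  then show thesis
    using that[of z] z0 eig by (simp add: z_def)
qed

lemma vec_min_entry_exists:
  fixes x :: "'a::linorder^'n"
  obtains i where "\<And>l. x$i \<le> x$l"
proof -
  have "Min (range (\<lambda>l. x$l)) \<in> range (\<lambda>l. x$l)"
    by (rule Min_in) auto
  then obtain i where "x$i = Min (range (\<lambda>l. x$l))"
    by (metis rangeE)
  then show thesis
    by (intro that[of i]) simp
qed

lemma ex_other_if_card_ge_2:
  assumes "2 \<le> CARD('a::finite)"
  shows "\<exists>w :: 'a. w \<noteq> v"
proof (rule ccontr)
  assume "\<nexists>w. w \<noteq> v"
  then have "UNIV = {v}"
    by auto
  show False
    using assms by (simp add: \<open>UNIV = {v}\<close>)
qed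

section \<open>Distances and transmissions\<close>

definition dominating_vertex :: "('n \<Rightarrow> 'n \<Rightarrow> bool) \<Rightarrow> 'n \<Rightarrow> bool" where
  "dominating_vertex E v \<longleftrightarrow> (\<forall>u. u \<noteq> v \<longrightarrow> E v u)"

definition complement_degree :: "('n \<Rightarrow> 'n \<Rightarrow> bool) \<Rightarrow> 'n \<Rightarrow> nat" where
  "complement_degree E v = card {u. u \<noteq> v \<and> \<not> E v u}"

definition cone_over_coregular :: "nat \<Rightarrow> ('n \<Rightarrow> 'n \<Rightarrow> bool) \<Rightarrow> bool" where
  "cone_over_coregular c E \<longleftrightarrow>
     (\<exists>v. dominating_vertex E v \<and> (\<forall>u. u \<noteq> v \<longrightarrow> complement_degree E u = c))"

locale connected_simple_graph =
  fixes E :: "'n::finite \<Rightarrow> 'n \<Rightarrow> bool"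
  assumes simple: "simple_graph E" and connected: "connected_graph E"
begin

abbreviation d :: "'n \<Rightarrow> 'n \<Rightarrow> nat" where
  "d \<equiv> gdist E"

lemma edge_sym: "E u v \<Longrightarrow> E v u"
  using simple by (simp add: simple_graph_def)

lemma no_loop: "\<not> E u u"
  using simple by (simp add: simple_graph_def)

lemma in_edge_rel [simp]: "(u, v) \<in> edge_rel E \<longleftrightarrow> E u v"
  by (simp add: edge_rel_def)

lemma walk_sym: "(u, v) \<in> edge_rel E ^^ k \<Longrightarrow> (v, u) \<in> edge_rel E ^^ k"
proof (induction k arbitrary: v)
  case (Suc k)
  then obtain w where "(u, w) \<in> edge_rel E ^^ k" "E w v"
    by auto
  then show ?case
    using Suc.IH edge_sym by (intro relpow_Suc_I2[of v w]) auto
qed simp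

lemma gdist_walk: "(u, v) \<in> edge_rel E ^^ d u v"
proof -
  have "\<exists>k. (u, v) \<in> edge_rel E ^^ k"
    using connected by (simp add: connected_graph_def rtrancl_power)
  then show ?thesis
    unfolding gdist_def by (rule LeastI_ex)
qed

lemma gdist_le: "(u, v) \<in> edge_rel E ^^ k \<Longrightarrow> d u v \<le> k"
  unfolding gdist_def by (rule Least_le)

lemma gdist_sym: "d u v = d v u"
  using gdist_le[OF walk_sym[OF gdist_walk]] by (metis order_antisym)

lemma gdist_eq_0_iff [simp]: "d u v = 0 \<longleftrightarrow> u = v"
  using gdist_walk[of u v] gdist_le[of u u 0] by auto

lemma gdist_self [simp]: "d u u = 0"
  by simp

lemma gdist_eq_1_iff: "d u v = 1 \<longleftrightarrow> E u v"
proof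
  assume "E u v"
  then have "d u v \<le> 1" "u \<noteq> v"
    using gdist_le[of u v 1] no_loop by auto
  then show "d u v = 1"
    by (metis gdist_eq_0_iff le_neq_implies_less less_one)
qed (use gdist_walk[of u v] in auto)

lemma gdist_le_2:
  assumes "E u w" and "E w v"
  shows "d u v \<le> 2"
proof -
  have "(u, v) \<in> edge_rel E ^^ Suc (Suc 0)"
    using assms by (intro relpow_Suc_I2[of u w] relpow_Suc_I2[of w v]) auto
  then show ?thesis
    by (metis gdist_le numeral_2_eq_2)
qed

lemma gdist_ge_2:
  assumes "u \<noteq> v" and "\<not> E u v"
  shows "2 \<le> d u v"
proof -
  have "d u v \<noteq> 0" "d u v \<noteq> 1"
    using assms gdist_eq_1_iff by auto
  then show ?thesis
    by linarith
qed

definition transm :: "'n \<Rightarrow> nat" where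
  "transm u = (\<Sum>v\<in>UNIV. d u v)"

definition max_transm :: nat where
  "max_transm = Max (range transm)"

definition deficit :: "'n \<Rightarrow> nat" where
  "deficit u = max_transm - transm u"

definition total_deficit :: nat where
  "total_deficit = (\<Sum>u\<in>UNIV. deficit u)"

lemma transmission_eq_transm: "transmission E u = real (transm u)"
  by (simp add: transmission_def transm_def)

lemma transm_le_max: "transm u \<le> max_transm"
  by (simp add: max_transm_def)

lemma transm_attains_max: "\<exists>u. transm u = max_transm"
proof -
  have "max_transm \<in> range transm"
    unfolding max_transm_def by (rule Max_in) auto
  then show ?thesis
    by (metis imageE)
qed

lemma real_deficit: "real (deficit u) = real max_transm - real (transm u)"
  using transm_le_max[of u] by (simp add: deficit_def)

lemma Dmax_eq_max_transm: "Dmax E = real max_transm"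
  unfolding Dmax_def
proof (rule Max_eqI)
  show "real max_transm \<in> range (transmission E)"
    using transm_attains_max by (metis rangeI transmission_eq_transm)
qed (auto simp: transmission_eq_transm transm_le_max)

lemma even_sum_transm: "even (\<Sum>u\<in>UNIV. transm u)"
proof -
  have "even (\<Sum>u\<in>A. \<Sum>v\<in>A. d u v)" if "finite A" for A
    using that
  proof (induction A rule: finite_induct)
    case (insert a A)
    have "(\<Sum>u\<in>A. d u a) = (\<Sum>v\<in>A. d a v)"
      by (intro sum.cong refl gdist_sym)
    then have "(\<Sum>u\<in>insert a A. \<Sum>v\<in>insert a A. d u v)
        = (\<Sum>u\<in>A. \<Sum>v\<in>A. d u v) + 2 * (\<Sum>v\<in>A. d a v)"
      using insert by (simp add: sum.distrib)
    then show ?case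
      using insert.IH by simp
  qed simp
  then show ?thesis
    by (simp add: transm_def)
qed

lemma total_deficit_eq: "total_deficit = CARD('n) * max_transm - (\<Sum>u\<in>UNIV. transm u)"
  using sum_subtractf_nat[of UNIV transm "\<lambda>_. max_transm"] transm_le_max
  by (simp add: total_deficit_def deficit_def)

lemma even_total_deficit: "even CARD('n) \<Longrightarrow> even total_deficit"
  using even_sum_transm by (simp add: total_deficit_eq)

lemma total_deficit_pos:
  assumes "\<not> transmission_regular E"
  shows "0 < total_deficit"
proof (rule ccontr)
  assume "\<not> 0 < total_deficit"
  then have "transm u = max_transm" for u
    using transm_le_max[of u] by (simp add: total_deficit_def deficit_def le_antisym)
  then have "range (transmission E) = {real max_transm}"
    by (auto simp: transmission_eq_transm)
  then show False
    using assms by (simp add: transmission_regular_def Dmax_def Dmin_def)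
qed

lemma card_ge_3_if_total_deficit_pos:
  assumes "0 < total_deficit"
  shows "3 \<le> CARD('n)"
proof (rule ccontr)
  obtain u where "deficit u \<noteq> 0"
    using assms sum.neutral[of UNIV deficit] unfolding total_deficit_def by (metis less_irrefl)
  then have u: "transm u < max_transm"
    by (simp add: deficit_def)
  obtain v where v: "transm v = max_transm"
    using transm_attains_max by blast
  assume "\<not> 3 \<le> CARD('n)"
  moreover have "u \<noteq> v"
    using u v by auto
  moreover have "card {u, v} \<le> CARD('n)"
    by (rule card_mono) auto
  ultimately have "{u, v} = UNIV"
    by (intro card_subset_eq) auto
  then have "transm u = d u v" and "transm v = d v u"
    using \<open>u \<noteq> v\<close> unfolding transm_def by (simp_all flip: \<open>{u, v} = UNIV\<close>)
  then have "transm u = transm v"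
    by (simp add: gdist_sym)
  then show False
    using u v by simp
qed

lemma complement_degree_dominating: "dominating_vertex E v \<Longrightarrow> complement_degree E v = 0"
  by (auto simp: dominating_vertex_def complement_degree_def)

lemma transm_if_dominating:
  assumes dom: "dominating_vertex E v"
  shows "transm u = CARD('n) - 1 + complement_degree E u"
proof -
  let ?B = "{l. l \<noteq> u \<and> \<not> E u l}"
  have "d u l = of_bool (l \<noteq> u) + of_bool (l \<in> ?B)" for l
  proof (cases "l = u \<or> E u l")
    case True
    then show ?thesis
      using gdist_eq_1_iff[of u l] no_loop by auto
  next
    case False
    then have "u \<noteq> v" "l \<noteq> v"
      using dom edge_sym by (auto simp: dominating_vertex_def)
    then have "d u l \<le> 2"
      using dom edge_sym by (intro gdist_le_2[of u v l]) (auto simp: dominating_vertex_def)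
    moreover have "2 \<le> d u l"
      using False by (intro gdist_ge_2) auto
    ultimately show ?thesis
      using False by simp
  qed
  then have "transm u = card {l. l \<noteq> u} + card ?B"
    by (simp add: transm_def sum.distrib sum_of_bool_eq)
  also have "card {l. l \<noteq> u} = CARD('n) - 1"
    using card_Diff_singleton[of u UNIV] by (simp add: Compl_eq_Diff_UNIV[symmetric] Collect_neg_eq)
  finally show ?thesis
    by (simp add: complement_degree_def)
qed

lemma dsl_matrix_entry:
  "dsl_matrix E $ i $ j = real (d i j) + (if i = j then real (transm i) else 0)"
  by (simp add: dsl_matrix_def dist_matrix_def transmission_eq_transm)

lemma dsl_matrix_symmetric: "transpose (dsl_matrix E) = dsl_matrix E"
  by (simp add: vec_eq_iff transpose_def dsl_matrix_entry gdist_sym)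

lemma dsl_matrix_mult_vector:
  "(dsl_matrix E *v x) $ i = real (transm i) * x$i + (\<Sum>j\<in>UNIV. real (d i j) * x$j)"
proof -
  have "(dsl_matrix E *v x) $ i
      = (\<Sum>j\<in>UNIV. real (d i j) * x$j + (if i = j then real (transm i) * x$j else 0))"
    unfolding matrix_vector_mult_def dsl_matrix_entry vec_lambda_beta
    by (intro sum.cong) (auto simp: algebra_simps)
  then show ?thesis
    by (simp add: sum.distrib)
qed

lemma tau_eq: "tau E = 2 * real max_transm - dsl_spectral_radius E"
  by (simp add: tau_def Dmax_eq_max_transm)

lemma eigenvalue_le_dsl_spectral_radius:
  "l \<in> real_eigenvalues (dsl_matrix E) \<Longrightarrow> l \<le> dsl_spectral_radius E"
  unfolding dsl_spectral_radius_def
  by (rule eigenvalue_le_largest_eigenvalue[OF dsl_matrix_symmetric])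

lemma dsl_perron_vector_exists:
  obtains x where "x \<noteq> 0" "\<And>i. 0 \<le> x$i" "dsl_matrix E *v x = dsl_spectral_radius E *\<^sub>R x"
  unfolding dsl_spectral_radius_def
  by (rule largest_eigenvalue_nonneg_eigenvector[OF dsl_matrix_symmetric])
    (simp_all add: dsl_matrix_entry)

end

section \<open>The lower bound and its extremal graphs\<close>

locale dsl_perron_vector = connected_simple_graph E for E :: "'n::finite \<Rightarrow> 'n \<Rightarrow> bool" +
  fixes x :: "real^'n"
  assumes nonzero: "x \<noteq> 0" and nonneg: "\<And>i. 0 \<le> x$i"
    and eigen: "dsl_matrix E *v x = dsl_spectral_radius E *\<^sub>R x"
begin

abbreviation x_sum :: real where
  "x_sum \<equiv> \<Sum>j\<in>UNIV. x$j"

definition slack :: "'n \<Rightarrow> 'n \<Rightarrow> real" where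
  "slack i j = (real (d i j) - 1) * (x$j - x$i)"

lemma x_sum_pos: "0 < x_sum"
proof -
  obtain j where "x$j \<noteq> 0"
    using nonzero by (auto simp: vec_eq_iff)
  then have "0 < x$j"
    using nonneg[of j] by simp
  also have "x$j \<le> x_sum"
    using nonneg by (intro member_le_sum) auto
  finally show ?thesis .
qed

lemma eigen_entry:
  "dsl_spectral_radius E * x$i = real (transm i) * x$i + (\<Sum>j\<in>UNIV. real (d i j) * x$j)"
  using arg_cong[OF eigen, of "\<lambda>y. y $ i"] by (simp add: dsl_matrix_mult_vector)

lemma tau_mult_x_sum: "tau E * x_sum = 2 * (\<Sum>j\<in>UNIV. real (deficit j) * x$j)"
proof -
  have "(\<Sum>i\<in>UNIV. \<Sum>j\<in>UNIV. real (d i j) * x$j) = (\<Sum>j\<in>UNIV. (\<Sum>i\<in>UNIV. real (d j i)) * x$j)"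
    by (subst sum.swap) (simp add: sum_distrib_right gdist_sym)
  also have "\<dots> = (\<Sum>j\<in>UNIV. real (transm j) * x$j)"
    by (simp add: transm_def)
  finally have "dsl_spectral_radius E * x_sum = 2 * (\<Sum>j\<in>UNIV. real (transm j) * x$j)"
    by (simp add: sum_distrib_left eigen_entry sum.distrib)
  then show ?thesis
    by (simp add: tau_eq real_deficit algebra_simps sum_distrib_left sum_subtractf)
qed

lemma x_sum_add_slacks:
  "x_sum + (\<Sum>j\<in>UNIV. slack i j) = (real CARD('n) + 2 * real (deficit i) - tau E) * x$i"
proof -
  have "(\<Sum>j\<in>UNIV. slack i j)
      = (\<Sum>j\<in>UNIV. real (d i j) * x$j) - x_sum - real (transm i) * x$i + real CARD('n) * x$i"
    by (simp add: slack_def transm_def algebra_simps sum.distrib sum_subtractf sum_distrib_left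
        sum_distrib_right)
  then show ?thesis
    using eigen_entry[of i] by (simp add: tau_eq real_deficit algebra_simps)
qed

context
  fixes i :: 'n
  assumes min: "\<And>l. x$i \<le> x$l"
begin

lemma slack_nonneg: "0 \<le> slack i j"
proof (cases "i = j")
  case False
  then have "1 \<le> d i j"
    by (simp add: Suc_le_eq flip: neq0_conv)
  then show ?thesis
    using min[of j] by (simp add: slack_def)
qed (simp add: slack_def)

lemma x_sum_le_min_entry: "x_sum \<le> (real CARD('n) + 2 * real (deficit i) - tau E) * x$i"
  using x_sum_add_slacks[of i] sum_nonneg[of UNIV "slack i", OF slack_nonneg] by linarith

lemma total_deficit_mult_min_entry:
  "real total_deficit * x$i \<le> (\<Sum>j\<in>UNIV. real (deficit j) * x$j)"
  unfolding total_deficit_def of_nat_sum sum_distrib_right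
  by (intro sum_mono mult_left_mono min) auto

lemma min_entry_pos: "0 < x$i"
  using x_sum_le_min_entry x_sum_pos nonneg[of i] by (cases "x$i = 0") auto

lemma tau_nonneg: "0 \<le> tau E"
proof -
  have "0 \<le> tau E * x_sum"
    unfolding tau_mult_x_sum
    using total_deficit_mult_min_entry min_entry_pos
    by (smt (verit) of_nat_0_le_iff zero_le_mult_iff)
  then show ?thesis
    using x_sum_pos by (simp add: zero_le_mult_iff)
qed

lemma deficit_inequality:
  "2 * real total_deficit \<le> tau E * (real CARD('n) + 2 * real (deficit i) - tau E)"
proof -
  have "2 * real total_deficit * x$i \<le> tau E * x_sum"
    unfolding tau_mult_x_sum using total_deficit_mult_min_entry by simp
  also have "\<dots> \<le> tau E * (real CARD('n) + 2 * real (deficit i) - tau E) * x$i"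
    using mult_left_mono[OF x_sum_le_min_entry tau_nonneg] by (simp add: mult.assoc)
  finally show ?thesis
    using min_entry_pos by simp
qed

lemma slacks_vanish_if_tight:
  assumes "0 < tau E"
    and "tau E * (real CARD('n) + 2 * real (deficit i) - tau E) = 2 * real total_deficit"
  shows "slack i j = 0"
proof -
  have "tau E * (x_sum + (\<Sum>j\<in>UNIV. slack i j)) = 2 * real total_deficit * x$i"
    using x_sum_add_slacks[of i] assms(2) by (simp add: mult.assoc[symmetric])
  also have "\<dots> \<le> tau E * x_sum"
    unfolding tau_mult_x_sum using total_deficit_mult_min_entry by simp
  finally have "(\<Sum>j\<in>UNIV. slack i j) \<le> 0"
    using assms(1) by (simp add: distrib_left mult_le_0_iff)
  then show ?thesis
    using sum_nonneg_eq_0_iff[of UNIV "slack i"] slack_nonneg by (simp add: order_antisym sum_nonneg)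
qed

lemma dominating_if_slacks_vanish:
  assumes slacks: "\<And>j. slack i j = 0" and others: "\<And>j. j \<noteq> i \<Longrightarrow> deficit j = 0"
    and "0 < deficit i"
  shows "dominating_vertex E i"
  unfolding dominating_vertex_def
proof (intro allI impI, rule ccontr)
  fix j assume "j \<noteq> i" and "\<not> E i j"
  then have "x$j = x$i"
    using slacks[of j] gdist_ge_2[of i j] by (simp add: slack_def)
  then have "x_sum \<le> (real CARD('n) - tau E) * x$i"
    using dsl_perron_vector.x_sum_le_min_entry[of E x j] min others[OF \<open>j \<noteq> i\<close>]
    by (simp add: dsl_perron_vector_axioms)
  moreover have "x_sum = (real CARD('n) + 2 * real (deficit i) - tau E) * x$i"
    using x_sum_add_slacks[of i] slacks by simp
  ultimately have "x$i * real (deficit i) \<le> 0"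
    by (simp add: algebra_simps)
  moreover have "0 < x$i * real (deficit i)"
    using \<open>0 < deficit i\<close> min_entry_pos by simp
  ultimately show False
    by linarith
qed

end

end

context connected_simple_graph
begin

lemma perron_vector_with_min_entry:
  obtains x i where "dsl_perron_vector E x" and "\<And>l. x$i \<le> x$l"
proof -
  obtain x where "x \<noteq> 0" "\<And>i. 0 \<le> x$i" "dsl_matrix E *v x = dsl_spectral_radius E *\<^sub>R x"
    using dsl_perron_vector_exists by blast
  then have "dsl_perron_vector E x"
    by unfold_locales
  moreover obtain i where "\<And>l. x$i \<le> x$l"
    using vec_min_entry_exists by blast
  ultimately show thesis
    using that by blast
qed

lemma smaller_root_le_tau:
  assumes c: "1 \<le> c" and cK: "c \<le> total_deficit"
  shows "smaller_root (real CARD('n) + 2 * real c) (2 * real c) \<le> tau E"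
proof -
  obtain x i where "dsl_perron_vector E x" and min: "\<And>l. x$i \<le> x$l"
    using perron_vector_with_min_entry by blast
  then interpret dsl_perron_vector E x
    by simp
  have "3 \<le> CARD('n)"
    using c cK by (intro card_ge_3_if_total_deficit_pos) simp
  moreover have "deficit i \<le> total_deficit"
    unfolding total_deficit_def by (rule member_le_sum) auto
  ultimately show ?thesis
    using smaller_root_le_if_deficit_inequality(1)[of "real CARD('n)" "real c" "real total_deficit"
        "real (deficit i)" "tau E"] c cK tau_nonneg[OF min] deficit_inequality[OF min]
    by simp
qed

lemma cone_if_tau_eq_smaller_root:
  assumes c: "1 \<le> c" and cK: "c \<le> total_deficit"
    and eq: "tau E = smaller_root (real CARD('n) + 2 * real c) (2 * real c)"
  shows "cone_over_coregular c E"
proof -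
  obtain x i where "dsl_perron_vector E x" and min: "\<And>l. x$i \<le> x$l"
    using perron_vector_with_min_entry by blast
  then interpret dsl_perron_vector E x
    by simp
  have n: "2 \<le> real CARD('n)"
    using card_ge_3_if_total_deficit_pos c cK by simp
  have "deficit i \<le> total_deficit"
    unfolding total_deficit_def by (rule member_le_sum) auto
  then have ki: "deficit i = c" and K: "total_deficit = c"
    using smaller_root_le_if_deficit_inequality(2)[of "real CARD('n)" "real c" "real total_deficit"
        "real (deficit i)" "tau E"] n c cK tau_nonneg[OF min] deficit_inequality[OF min] eq
    by simp_all
  have others: "deficit j = 0" if "j \<noteq> i" for j
  proof -
    have "total_deficit = deficit i + (\<Sum>j\<in>UNIV - {i}. deficit j)"
      unfolding total_deficit_def by (simp add: sum.remove)
    then show ?thesis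
      using ki K that by simp
  qed
  have "tau E * (real CARD('n) + 2 * real (deficit i) - tau E) = 2 * real total_deficit"
    using smaller_root_root n c ki K eq by simp
  then have "slack i j = 0" for j
    using slacks_vanish_if_tight[OF min] smaller_root_bounds(1) n c eq by simp
  then have dom: "dominating_vertex E i"
    using dominating_if_slacks_vanish[OF min] others ki c by simp
  have "complement_degree E j = c" if "j \<noteq> i" for j
    using transm_if_dominating[OF dom, of j] transm_if_dominating[OF dom, of i]
      complement_degree_dominating[OF dom] others[OF that] ki transm_le_max[of j]
      zero_less_card_finite[where 'a='n]
    by (simp add: deficit_def)
  then show ?thesis
    unfolding cone_over_coregular_def using dom by blast
qed

context
  fixes v :: 'n and c :: nat
  assumes dom: "dominating_vertex E v" and cd: "\<And>u. u \<noteq> v \<Longrightarrow> complement_degree E u = c"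
    and n: "2 \<le> CARD('n)"
begin

lemma transm_apex: "transm v = CARD('n) - 1"
  using transm_if_dominating[OF dom] complement_degree_dominating[OF dom] by simp

lemma transm_non_apex: "u \<noteq> v \<Longrightarrow> transm u = CARD('n) - 1 + c"
  using transm_if_dominating[OF dom] cd by simp

lemma max_transm_cone: "max_transm = CARD('n) - 1 + c"
proof -
  obtain w where "w \<noteq> v"
    using ex_other_if_card_ge_2[OF n] by blast
  obtain u where "transm u = max_transm"
    using transm_attains_max by blast
  then have "max_transm \<le> CARD('n) - 1 + c"
    using transm_apex transm_non_apex by (cases "u = v") auto
  then show ?thesis
    using transm_le_max[of w] transm_non_apex[OF \<open>w \<noteq> v\<close>] by simp
qed

lemma cone_eigenvector:
  fixes t :: real and y :: "real^'n"
  assumes root: "t * (real CARD('n) + 2 * real c - t) = 2 * real c"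
    and y_def: "y = (\<chi> l. if l = v then 1 - t else 1)"
  shows "dsl_matrix E *v y = (2 * real max_transm - t) *\<^sub>R y"
proof -
  have yv: "y$v = 1 - t" and yu: "\<And>u. u \<noteq> v \<Longrightarrow> y$u = 1"
    by (simp_all add: y_def)
  have row: "(\<Sum>l\<in>UNIV. real (d j l) * y$l) = real (transm j) - t * real (d j v)" for j
  proof -
    have "(\<Sum>l\<in>UNIV. real (d j l) * y$l)
        = (\<Sum>l\<in>UNIV. real (d j l) - (if l = v then t * real (d j v) else 0))"
      by (intro sum.cong) (auto simp: y_def algebra_simps)
    then show ?thesis
      by (simp add: sum_subtractf transm_def)
  qed
  have Tv: "real (transm v) = real CARD('n) - 1"
    and max: "real max_transm = real CARD('n) - 1 + real c"
    using transm_apex max_transm_cone n by (simp_all add: of_nat_diff)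
  have "(dsl_matrix E *v y) $ j = ((2 * real max_transm - t) *\<^sub>R y) $ j" for j
  proof (cases "j = v")
    case True
    have "(2 * real max_transm - t) * (1 - t) - (real (transm v) * (1 - t) + real (transm v))
        = 2 * real c - t * (real CARD('n) + 2 * real c - t)"
      unfolding Tv max by (simp add: algebra_simps)
    then show ?thesis
      using True root by (simp add: dsl_matrix_mult_vector row yv)
  next
    case False
    then have "d j v = 1"
      using dom edge_sym gdist_eq_1_iff by (auto simp: dominating_vertex_def)
    then show ?thesis
      using False transm_non_apex max_transm_cone by (simp add: dsl_matrix_mult_vector row yu)
  qed
  then show ?thesis
    by (simp add: vec_eq_iff)
qed

end

lemma tau_le_smaller_root_if_cone:
  assumes c: "1 \<le> c" and n: "2 \<le> CARD('n)" and "cone_over_coregular c E"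
  shows "tau E \<le> smaller_root (real CARD('n) + 2 * real c) (2 * real c)"
proof -
  define t where "t = smaller_root (real CARD('n) + 2 * real c) (2 * real c)"
  obtain v where dom: "dominating_vertex E v" and cd: "\<And>u. u \<noteq> v \<Longrightarrow> complement_degree E u = c"
    using assms(3) unfolding cone_over_coregular_def by blast
  define y :: "real^'n" where "y = (\<chi> l. if l = v then 1 - t else 1)"
  have "t * (real CARD('n) + 2 * real c - t) = 2 * real c"
    unfolding t_def using smaller_root_root n c by simp
  then have "dsl_matrix E *v y = (2 * real max_transm - t) *\<^sub>R y"
    using cone_eigenvector[OF dom cd n _ y_def] by blast
  moreover obtain w where "w \<noteq> v"
    using ex_other_if_card_ge_2[OF n] by blast
  then have "y \<noteq> 0"
    by (auto simp: y_def vec_eq_iff)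
  ultimately have "2 * real max_transm - t \<le> dsl_spectral_radius E"
    by (intro eigenvalue_le_dsl_spectral_radius) (auto simp: real_eigenvalues_def)
  then show ?thesis
    by (simp add: tau_eq t_def)
qed

theorem tau_eq_smaller_root_iff:
  assumes "1 \<le> c" and "c \<le> total_deficit"
  shows "tau E = smaller_root (real CARD('n) + 2 * real c) (2 * real c) \<longleftrightarrow> cone_over_coregular c E"
proof
  assume "cone_over_coregular c E"
  moreover have "2 \<le> CARD('n)"
    using card_ge_3_if_total_deficit_pos assms by simp
  ultimately show "tau E = smaller_root (real CARD('n) + 2 * real c) (2 * real c)"
    using smaller_root_le_tau[OF assms] tau_le_smaller_root_if_cone[OF assms(1)] by force
qed (rule cone_if_tau_eq_smaller_root[OF assms])

end

section \<open>The graphs \<open>K\<^sub>1\<^sub>,\<^sub>2\<^sub>,\<^sub>.\<^sub>.\<^sub>.\<^sub>,\<^sub>2\<close> and the DVDR graphs\<close>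

lemma K122_adj_irrefl: "\<not> K122_adj a a"
  by (simp add: K122_adj_def)

lemma K122_adj_0: "K122_adj 0 b \<longleftrightarrow> 0 < b" "K122_adj b 0 \<longleftrightarrow> 0 < b"
  by (auto simp: K122_adj_def)

lemma twice_half_cases: "(m::nat) = 2 * (m div 2) \<or> m = 2 * (m div 2) + 1"
  by (cases "even m") (auto elim!: evenE oddE)

lemma K122_nonadjacent_unique:
  "\<not> K122_adj a b \<Longrightarrow> \<not> K122_adj a c \<Longrightarrow> a \<noteq> b \<Longrightarrow> a \<noteq> c \<Longrightarrow> b = c"
  unfolding K122_adj_def
  using twice_half_cases[of "a + 1"] twice_half_cases[of "b + 1"] twice_half_cases[of "c + 1"]
  by auto

lemma K122_nonadjacent_set:
  assumes "odd n" and "0 < b" and "b < n"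
  shows "{a. a < n \<and> a \<noteq> b \<and> \<not> K122_adj b a} = {if odd b then b + 1 else b - 1}"
proof (intro set_eqI iffI)
  fix a assume "a \<in> {a. a < n \<and> a \<noteq> b \<and> \<not> K122_adj b a}"
  then show "a \<in> {if odd b then b + 1 else b - 1}"
    unfolding K122_adj_def using twice_half_cases[of "a + 1"] twice_half_cases[of "b + 1"] by auto
next
  fix a assume "a \<in> {if odd b then b + 1 else b - 1}"
  then show "a \<in> {a. a < n \<and> a \<noteq> b \<and> \<not> K122_adj b a}"
    using assms unfolding K122_adj_def by (auto elim!: oddE evenE)
qed

lemma K122_nonadjacent_consecutive:
  "even m \<Longrightarrow> \<not> K122_adj (m + 1) (m + 2) \<and> \<not> K122_adj (m + 2) (m + 1)"
  by (auto simp: K122_adj_def elim!: evenE)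

lemma bij_betw_extend_by_pair:
  fixes m :: nat
  assumes f: "bij_betw f B {1..m}" and "a \<notin> B" "b \<notin> B" "a \<noteq> b"
  shows "bij_betw (f(a := m + 1, b := m + 2)) (insert a (insert b B)) {1..m + 2}"
proof -
  let ?g = "f(a := m + 1, b := m + 2)"
  have "bij_betw ?g B {1..m}"
    using f by (rule bij_betw_cong[THEN iffD1, rotated]) (use assms in auto)
  moreover have "bij_betw ?g {a, b} {m + 1, m + 2}"
    using assms(4) by (auto simp: bij_betw_def)
  ultimately have "bij_betw ?g (B \<union> {a, b}) ({1..m} \<union> {m + 1, m + 2})"
    by (rule bij_betw_combine) auto
  moreover have "B \<union> {a, b} = insert a (insert b B)" and "{1..m} \<union> {m + 1, m + 2} = {1..m + 2}"
    by auto
  ultimately show ?thesis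
    by simp
qed

lemma involution_remove_pair:
  assumes inv: "\<And>u. u \<in> A \<Longrightarrow> \<sigma> u \<in> A \<and> \<sigma> u \<noteq> u \<and> \<sigma> (\<sigma> u) = u"
    and "a \<in> A" and u: "u \<in> A - {a, \<sigma> a}"
  shows "\<sigma> u \<in> A - {a, \<sigma> a} \<and> \<sigma> u \<noteq> u \<and> \<sigma> (\<sigma> u) = u"
proof -
  have "\<sigma> u \<in> A" "\<sigma> u \<noteq> u" "\<sigma> (\<sigma> u) = u"
    using inv u by auto
  moreover have "\<sigma> u \<noteq> a" "\<sigma> u \<noteq> \<sigma> a"
    using u \<open>\<sigma> (\<sigma> u) = u\<close> inv[OF \<open>a \<in> A\<close>] by auto
  ultimately show ?thesis
    by simp
qed

lemma involution_pairing:
  assumes "finite A" and "\<And>u. u \<in> A \<Longrightarrow> \<sigma> u \<in> A \<and> \<sigma> u \<noteq> u \<and> \<sigma> (\<sigma> u) = u"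
  shows "even (card A) \<and>
    (\<exists>f. bij_betw f A {1..card A} \<and> (\<forall>u\<in>A. \<not> K122_adj (f u) (f (\<sigma> u))))"
  using assms
proof (induction "card A" arbitrary: A rule: less_induct)
  case less
  show ?case
  proof (cases "A = {}")
    case False
    then obtain a where a: "a \<in> A"
      by blast
    define B where "B = A - {a, \<sigma> a}"
    have aa: "\<sigma> a \<in> A" "\<sigma> a \<noteq> a" "\<sigma> (\<sigma> a) = a"
      using less.prems(2)[OF a] by auto
    have A: "A = insert a (insert (\<sigma> a) B)"
      using a aa by (auto simp: B_def)
    have card: "card A = card B + 2"
      using less.prems(1) a aa card_Diff_subset[of "{a, \<sigma> a}" A] card_mono[of A "{a, \<sigma> a}"]
      by (simp add: B_def)
    have closed: "\<sigma> u \<in> B \<and> \<sigma> u \<noteq> u \<and> \<sigma> (\<sigma> u) = u" if "u \<in> B" for u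
      using involution_remove_pair[OF less.prems(2) a] that by (simp add: B_def)
    then obtain f where even: "even (card B)" and f: "bij_betw f B {1..card B}"
      and pairs: "\<forall>u\<in>B. \<not> K122_adj (f u) (f (\<sigma> u))"
      using less.hyps[of B] less.prems(1) card by (auto simp: B_def)
    define g where "g = f(a := card B + 1, \<sigma> a := card B + 2)"
    have "bij_betw g A {1..card B + 2}"
      unfolding g_def A using f aa by (intro bij_betw_extend_by_pair) (auto simp: B_def)
    then have "bij_betw g A {1..card A}"
      by (simp add: card)
    moreover have "\<not> K122_adj (g u) (g (\<sigma> u))" if "u \<in> A" for u
    proof (cases "u \<in> B")
      case True
      then show ?thesis
        using closed[OF True] pairs by (auto simp: g_def B_def)
    next
      case False
      then have "u = a \<or> u = \<sigma> a"
        using that A by auto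
      then show ?thesis
        using aa K122_nonadjacent_consecutive[OF even] by (auto simp: g_def)
    qed
    ultimately show ?thesis
      using even card by auto
  qed (auto simp: bij_betw_def)
qed

lemma K122_labelling:
  fixes i :: "'a::finite"
  assumes \<sigma>: "\<And>u. u \<noteq> i \<Longrightarrow> \<sigma> u \<noteq> i \<and> \<sigma> u \<noteq> u \<and> \<sigma> (\<sigma> u) = u"
  obtains f where "bij_betw f UNIV {0..<CARD('a)}" and "f i = 0"
    and "\<And>u. u \<noteq> i \<Longrightarrow> \<not> K122_adj (f u) (f (\<sigma> u))"
proof -
  define A where "A = UNIV - {i}"
  have "card A = CARD('a) - 1"
    by (simp add: A_def card_Diff_singleton)
  then obtain g where g: "bij_betw g A {1..CARD('a) - 1}"
    and pairs: "\<And>u. u \<in> A \<Longrightarrow> \<not> K122_adj (g u) (g (\<sigma> u))"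
    using involution_pairing[of A \<sigma>] \<sigma> by (auto simp: A_def)
  define f where "f = g(i := 0)"
  have "bij_betw f A {1..CARD('a) - 1}"
    using g by (rule bij_betw_cong[THEN iffD1, rotated]) (simp add: f_def A_def)
  then have "bij_betw f (A \<union> {i}) ({1..CARD('a) - 1} \<union> {0})"
    by (rule bij_betw_combine) (auto simp: f_def bij_betw_def)
  moreover have "A \<union> {i} = UNIV" and "{1..CARD('a) - 1} \<union> {0} = {0..<CARD('a)}"
    by (auto simp: A_def)
  ultimately have "bij_betw f UNIV {0..<CARD('a)}"
    by simp
  moreover have "\<not> K122_adj (f u) (f (\<sigma> u))" if "u \<noteq> i" for u
    using pairs[of u] \<sigma>[OF that] that by (simp add: f_def A_def)
  ultimately show thesis
    using that by (simp add: f_def)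
qed

context connected_simple_graph
begin

lemma degree_eq_iff_dominating: "degree E v = CARD('n) - 1 \<longleftrightarrow> dominating_vertex E v"
proof -
  have sub: "{u. E v u} \<subseteq> UNIV - {v}"
    using no_loop by auto
  have rest: "card (UNIV - {v}) = CARD('n) - 1"
    by (simp add: card_Diff_singleton)
  have "degree E v = CARD('n) - 1 \<longleftrightarrow> {u. E v u} = UNIV - {v}"
  proof
    assume "degree E v = CARD('n) - 1"
    then show "{u. E v u} = UNIV - {v}"
      using sub rest by (intro card_subset_eq) (auto simp: degree_def)
  qed (use rest in \<open>simp add: degree_def\<close>)
  also have "\<dots> \<longleftrightarrow> dominating_vertex E v"
    using no_loop by (auto simp: dominating_vertex_def)
  finally show ?thesis .
qed

lemma card_neighbours_apart_from_dominating:
  assumes dom: "dominating_vertex E v" and "w \<noteq> v"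
  shows "card {u. u \<noteq> v \<and> E w u} + complement_degree E w + 2 = CARD('n)"
proof -
  let ?A = "{u. u \<noteq> v \<and> E w u}" and ?B = "{u. u \<noteq> w \<and> \<not> E w u}"
  have "E w v"
    using dom \<open>w \<noteq> v\<close> edge_sym by (auto simp: dominating_vertex_def)
  then have "?A \<union> ?B = UNIV - {v, w}" and "?A \<inter> ?B = {}"
    using no_loop by auto
  then have "card ?A + card ?B = card (UNIV - {v, w})"
    by (simp flip: card_Un_disjoint)
  also have "card (UNIV - {v, w}) + 2 = CARD('n)"
    using \<open>w \<noteq> v\<close> card_Diff_subset[of "{v, w}" UNIV] card_mono[of UNIV "{v, w}"] by simp
  finally show ?thesis
    by (simp add: complement_degree_def)
qed

lemma DVDR_iff_cone:
  assumes "4 \<le> CARD('n)"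
  shows "DVDR (CARD('n) - 4) E \<longleftrightarrow> cone_over_coregular 2 E"
proof -
  have key: "card {u. u \<noteq> v \<and> E w u} = CARD('n) - 4 \<longleftrightarrow> complement_degree E w = 2"
    if "dominating_vertex E v" and "w \<noteq> v" for v w
    using card_neighbours_apart_from_dominating[OF that] assms by presburger
  show ?thesis
    unfolding DVDR_def cone_over_coregular_def degree_eq_iff_dominating
    using connected key by blast
qed

lemma cone_if_iso_K122:
  assumes "odd CARD('n)" and "iso_K122 E"
  shows "cone_over_coregular 1 E"
proof -
  obtain f where bij: "bij_betw f UNIV {0..<CARD('n)}" and adj: "\<And>u v. E u v \<longleftrightarrow> K122_adj (f u) (f v)"
    using assms(2) unfolding iso_K122_def by blast
  have inj: "inj f" and img: "range f = {0..<CARD('n)}"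
    using bij by (simp_all add: bij_betw_def)
  have "0 \<in> range f"
    unfolding img by simp
  then obtain i where "f i = 0"
    by auto
  have pos: "0 < f u" if "u \<noteq> i" for u
  proof -
    have "f u \<noteq> f i"
      using inj that by (auto dest: injD)
    then show ?thesis
      using \<open>f i = 0\<close> by simp
  qed
  then have dom: "dominating_vertex E i"
    using \<open>f i = 0\<close> by (simp add: dominating_vertex_def adj K122_adj_0)
  have "complement_degree E u = 1" if "u \<noteq> i" for u
  proof -
    have "f ` {l. l \<noteq> u \<and> \<not> E u l} = {a. a < CARD('n) \<and> a \<noteq> f u \<and> \<not> K122_adj (f u) a}"
      using bij by (auto simp: adj bij_betw_def inj_eq image_iff)
    moreover have "0 < f u" "f u < CARD('n)"
      using pos[OF that] img by auto
    ultimately have "f ` {l. l \<noteq> u \<and> \<not> E u l} = {if odd (f u) then f u + 1 else f u - 1}"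
      using K122_nonadjacent_set[OF assms(1)] by simp
    moreover have "card (f ` {l. l \<noteq> u \<and> \<not> E u l}) = complement_degree E u"
      unfolding complement_degree_def using inj by (simp add: card_image inj_on_subset)
    ultimately show ?thesis
      by simp
  qed
  then show ?thesis
    unfolding cone_over_coregular_def using dom by blast
qed

lemma non_neighbour_involution:
  assumes dom: "dominating_vertex E i" and cd: "\<And>u. u \<noteq> i \<Longrightarrow> complement_degree E u = 1"
  obtains \<sigma> where "\<And>u. u \<noteq> i \<Longrightarrow> \<sigma> u \<noteq> i \<and> \<sigma> u \<noteq> u \<and> \<sigma> (\<sigma> u) = u"
    and "\<And>u w. u \<noteq> i \<Longrightarrow> w \<noteq> u \<Longrightarrow> E u w \<longleftrightarrow> w \<noteq> \<sigma> u"
proof -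
  define \<sigma> where "\<sigma> u = (THE l. l \<noteq> u \<and> \<not> E u l)" for u
  have \<sigma>: "{l. l \<noteq> u \<and> \<not> E u l} = {\<sigma> u}" if u: "u \<noteq> i" for u
  proof -
    obtain l where l: "{l. l \<noteq> u \<and> \<not> E u l} = {l}"
      using cd[OF u] by (auto simp: complement_degree_def card_1_singleton_iff)
    then have "\<sigma> u = l"
      unfolding \<sigma>_def by (intro the_equality) auto
    then show ?thesis
      using l by simp
  qed
  have adj: "E u w \<longleftrightarrow> w \<noteq> \<sigma> u" if "u \<noteq> i" "w \<noteq> u" for u w
    using \<sigma>[OF that(1)] that(2) by blast
  have apex: "\<sigma> u \<noteq> i" and moves: "\<sigma> u \<noteq> u" if "u \<noteq> i" for u
    using \<sigma>[OF that] that dom edge_sym by (auto simp: dominating_vertex_def)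
  have "\<sigma> (\<sigma> u) = u" if "u \<noteq> i" for u
    using adj[of "\<sigma> u" u] adj[of u "\<sigma> u"] apex[OF that] moves[OF that] that edge_sym
    by metis
  then show thesis
    using that apex moves adj by blast
qed

lemma iso_K122_if_cone:
  assumes "cone_over_coregular 1 E"
  shows "iso_K122 E"
proof -
  obtain i where dom: "dominating_vertex E i" and "\<And>u. u \<noteq> i \<Longrightarrow> complement_degree E u = 1"
    using assms unfolding cone_over_coregular_def by blast
  then obtain \<sigma> where \<sigma>: "\<And>u. u \<noteq> i \<Longrightarrow> \<sigma> u \<noteq> i \<and> \<sigma> u \<noteq> u \<and> \<sigma> (\<sigma> u) = u"
    and \<sigma>_adj: "\<And>u w. u \<noteq> i \<Longrightarrow> w \<noteq> u \<Longrightarrow> E u w \<longleftrightarrow> w \<noteq> \<sigma> u"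
    using non_neighbour_involution by blast
  obtain f where bij: "bij_betw f UNIV {0..<CARD('n)}" and "f i = 0"
    and pairs: "\<And>u. u \<noteq> i \<Longrightarrow> \<not> K122_adj (f u) (f (\<sigma> u))"
    using K122_labelling[OF \<sigma>] by blast
  have inj: "inj f"
    using bij by (simp add: bij_betw_def)
  have pos: "0 < f u" if "u \<noteq> i" for u
    using inj that \<open>f i = 0\<close> by (metis injD neq0_conv)
  have "E u w \<longleftrightarrow> K122_adj (f u) (f w)" for u w
  proof -
    consider "u = w" | "u = i" "w \<noteq> i" | "w = i" "u \<noteq> i" | "u \<noteq> i" "w \<noteq> i" "u \<noteq> w"
      by blast
    then show ?thesis
    proof cases
      case 4
      have "\<not> K122_adj (f u) (f w) \<longleftrightarrow> w = \<sigma> u"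
      proof
        assume "\<not> K122_adj (f u) (f w)"
        moreover have "f u \<noteq> f w" "f u \<noteq> f (\<sigma> u)"
          using inj 4 \<sigma>[OF 4(1)] by (auto simp: inj_eq)
        ultimately have "f w = f (\<sigma> u)"
          using pairs[OF 4(1)] by (intro K122_nonadjacent_unique)
        then show "w = \<sigma> u"
          using inj by (simp add: inj_eq)
      qed (use pairs[OF 4(1)] in simp)
      then show ?thesis
        using \<sigma>_adj[of u w] 4 by auto
    qed (use no_loop K122_adj_irrefl dom edge_sym pos \<open>f i = 0\<close> K122_adj_0
        in \<open>auto simp: dominating_vertex_def\<close>)
  qed
  then show ?thesis
    unfolding iso_K122_def using bij by blast
qed

end

theorem theorem1:
  fixes E :: "'n::finite \<Rightarrow> 'n \<Rightarrow> bool"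
  assumes "simple_graph E" and "connected_graph E" and "\<not> transmission_regular E"
  shows "(odd CARD('n) \<longrightarrow>
            tau E \<ge> (real CARD('n) + 2 - sqrt ((real CARD('n))\<^sup>2 + 4 * real CARD('n) - 4)) / 2 \<and>
            (tau E = (real CARD('n) + 2 - sqrt ((real CARD('n))\<^sup>2 + 4 * real CARD('n) - 4)) / 2
               \<longleftrightarrow> iso_K122 E))
       \<and> (even CARD('n) \<longrightarrow>
            tau E \<ge> (real CARD('n) + 4 - sqrt ((real CARD('n))\<^sup>2 + 8 * real CARD('n))) / 2 \<and>
            (tau E = (real CARD('n) + 4 - sqrt ((real CARD('n))\<^sup>2 + 8 * real CARD('n))) / 2
               \<longleftrightarrow> DVDR (CARD('n) - 4) E))"
proof -
  interpret connected_simple_graph E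
    using assms(1,2) by unfold_locales
  let ?n = "real CARD('n)"
  have K: "0 < total_deficit"
    using total_deficit_pos[OF assms(3)] .
  have n: "3 \<le> CARD('n)"
    using card_ge_3_if_total_deficit_pos[OF K] .
  have root1:
      "smaller_root (?n + 2 * real 1) (2 * real 1) = (?n + 2 - sqrt (?n\<^sup>2 + 4 * ?n - 4)) / 2"
    and root2: "smaller_root (?n + 2 * real 2) (2 * real 2) = (?n + 4 - sqrt (?n\<^sup>2 + 8 * ?n)) / 2"
    by (simp_all add: smaller_root_def power2_eq_square algebra_simps)
  have "iso_K122 E \<longleftrightarrow> cone_over_coregular 1 E" if "odd CARD('n)"
    using cone_if_iso_K122[OF that] iso_K122_if_cone by blast
  moreover have "2 \<le> total_deficit" if "even CARD('n)"
    using K even_total_deficit[OF that] by (auto elim!: evenE)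
  moreover have "DVDR (CARD('n) - 4) E \<longleftrightarrow> cone_over_coregular 2 E" if "even CARD('n)"
    using n that by (intro DVDR_iff_cone) presburger
  ultimately show ?thesis
    unfolding root1[symmetric] root2[symmetric]
    using smaller_root_le_tau[of 1] smaller_root_le_tau[of 2] tau_eq_smaller_root_iff[of 1]
      tau_eq_smaller_root_iff[of 2] K
    by auto
qed

end
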